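(* Under the standing assumptions with Gaussian signaling $x\sim\mathcal{CN}(0,1)$ (so $\hat\phi(\rho)=1/(1+\rho)$), let $\rho^*=\rho^*_{\rm Gau}=[\hat\gamma(1)]^{-1}-1$ and $v^*=\hat\phi(\rho^* )$. Then $$\int_0^{\rho^*}\hat\phi(\rho)\,d\rho+\int_{\rho^*}^{snr}\eta^{-1}(\rho)\,d\rho=\lim_{N\to\infty}\tfrac1N\log\det\big(\mathbf I+snr\,\mathbf A^{\mathrm H}\mathbf A\big),$$ i.e. the area $A_{\rm ADGO}$ equals the Gaussian capacity $C_{\rm Gau\text{-}LUIS}(snr)=\frac1N\log\det(\mathbf I+snr\,\mathbf A^{\mathrm H}\mathbf A)$ of the LUIS. Consequently, under the coded OAMP state-evolution assumption, the OAMP achievable rate (for codes whose transfer functions converge to $\min\{\eta^{-1},\hat\phi\}$ on $[0,snr]$ from below) converges to $C_{\rm Gau\text{-}LUIS}(snr)$.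
   Context: Standing assumptions (LUIS): $M,N\to\infty$ with $\beta=N/M$ fixed; $\mathbf A\in\mathbb C^{M\times N}$ right-unitarily invariant, the empirical eigenvalue distribution of $\mathbf A^{\mathrm H}\mathbf A$ converges to a compactly supported limit, $\frac1N\mathrm{tr}(\mathbf A^{\mathrm H}\mathbf A)\to1$, $\mathbf A\ne\mathbf 0$; normalized traces/log-determinants denote large-system limits; $\mathbf y=\mathbf A\mathbf x+\mathbf n$, $\mathbf n\sim\mathcal{CN}(\mathbf 0,\sigma^2\mathbf I)$, $snr=\sigma^{-2}$. $\hat\phi(\rho)=\mathrm E|x-\mathrm E[x\mid\sqrt\rho x+z]|^2$, $z\sim\mathcal{CN}(0,1)$. $\hat\gamma(v)=\frac1N\mathrm{tr}\{(snr\,\mathbf A^{\mathrm H}\mathbf A+v^{-1}\mathbf I)^{-1}\}$ with inverse $\hat\gamma^{-1}$; $\eta(v)=v^{-1}-[\hat\gamma^{-1}(v)]^{-1}$, decreasing with $\eta(0^+)=snr$, inverse $\eta^{-1}$. Coded OAMP state-evolution assumption: a code with transfer function $\hat\phi^{\mathcal C}(\rho)=\frac1N\mathrm{mmse}(\mathbf x\mid\sqrt\rho\mathbf x+\mathbf z,\mathbf x\in\mathcal C)$ satisfying $\hat\phi^{\mathcal C}<\min\{\eta^{-1},\hat\phi\}$ on $[0,snr)$ is decoded error-free by OAMP, and its rate $\int_0^\infty\hat\phi^{\mathcal C}d\rho$ is the OAMP achievable rate. *)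

theory Defs
  imports "HOL-Probability.Probability"
begin

text \<open>The limiting empirical eigenvalue distribution of
  A^H A is a probability measure mu on the reals (compactly supported, on [0,B]).
  All normalized traces / log-determinants are large-system limits, i.e. integrals
  against mu.  Logarithms are natural (nats).\<close>

definition phi_gau :: "real \<Rightarrow> real" where
  "phi_gau \<rho> = 1 / (1 + \<rho>)"

text \<open>gamma_hat(v) = lim (1/N) tr (snr A^H A + v^{-1} I)^{-1}\<close>
definition gamma_hat :: "real measure \<Rightarrow> real \<Rightarrow> real \<Rightarrow> real" where
  "gamma_hat \<mu> snr v = (\<integral>t. 1 / (snr * t + 1 / v) \<partial>\<mu>)"

definition gamma_hat_inv :: "real measure \<Rightarrow> real \<Rightarrow> real \<Rightarrow> real" where
  "gamma_hat_inv \<mu> snr u = (THE v. 0 < v \<and> gamma_hat \<mu> snr v = u)"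

definition eta_dom :: "real measure \<Rightarrow> real \<Rightarrow> real set" where
  "eta_dom \<mu> snr = {u. 0 < u \<and> (\<exists>v>0. gamma_hat \<mu> snr v = u)}"

definition eta :: "real measure \<Rightarrow> real \<Rightarrow> real \<Rightarrow> real" where
  "eta \<mu> snr v = 1 / v - 1 / gamma_hat_inv \<mu> snr v"

definition eta_inv :: "real measure \<Rightarrow> real \<Rightarrow> real \<Rightarrow> real" where
  "eta_inv \<mu> snr \<rho> = (THE v. v \<in> eta_dom \<mu> snr \<and> eta \<mu> snr v = \<rho>)"

text \<open>The curve min{eta^{-1}, phi_hat} on [0,snr).  eta is decreasing, so for
  rho below the range of eta the value eta^{-1}(rho) is (conventionally) +infinity and the
  minimum is phi_hat(rho).\<close>
definition min_curve :: "real measure \<Rightarrow> real \<Rightarrow> real \<Rightarrow> real" where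
  "min_curve \<mu> snr \<rho> =
     (if \<exists>v\<in>eta_dom \<mu> snr. eta \<mu> snr v = \<rho>
      then min (eta_inv \<mu> snr \<rho>) (phi_gau \<rho>) else phi_gau \<rho>)"

definition C_gau_luis :: "real measure \<Rightarrow> real \<Rightarrow> real" where
  "C_gau_luis \<mu> snr = (\<integral>t. ln (1 + snr * t) \<partial>\<mu>)"

end

theory Submission
  imports Defs
begin

(* Write a = snr t for the scaled eigenvalue and let p v, q v, s v, L v be the mu-averages of
   1/(1 + v a), a/(1 + v a), (a/(1 + v a))^2 and ln (1 + v a).  Then gamma_hat v = v p v and
   p = 1 - v q, hence eta (v p v) = q v / p v =: r v, so v |-> (r v, v p v) parametrises the graph
   of eta^-1, with r 0 = snr and r 1 = rho*.  Unless the spectrum is degenerate, r is strictly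
   decreasing, because r' = (q^2 - s) / p^2 is minus a variance divided by p^2.  Since L' = q and
   p' = v s - q, the function v |-> integral_{rho*}^{r v} eta^-1 + L v + ln (p v) has derivative
   v p r' + q + p'/p = 0, so integral_{rho*}^{snr} eta^-1 = L 1 + ln (p 1); and the phi-part
   integral_0^{rho*} 1/(1 + rho) = ln (1 + rho* ) = - ln (p 1) cancels the logarithm, leaving the
   capacity L 1.  For the rate, v p v >= 1/(1 + r v) iff v >= 1 shows that min (eta^-1, phi) is
   phi left of rho* and eta^-1 right of it, and dominated convergence finishes the proof. *)

lemma (in prob_space) has_field_derivative_integral_quadratic_remainder:
  fixes g :: "real \<Rightarrow> 'a \<Rightarrow> real" and d :: "'a \<Rightarrow> real"
  assumes "0 < \<delta>"
    and integrable: "\<And>y. \<bar>y - v\<bar> < \<delta> \<Longrightarrow> integrable M (g y)"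
    and integrable_d: "integrable M d"
    and remainder: "\<And>y. \<bar>y - v\<bar> < \<delta> \<Longrightarrow>
      AE t in M. \<bar>g y t - g v t - (y - v) * d t\<bar> \<le> K * (y - v)^2"
  shows "((\<lambda>y. \<integral>t. g y t \<partial>M) has_field_derivative (\<integral>t. d t \<partial>M)) (at v)"
proof -
  let ?I = "\<lambda>y. \<integral>t. g y t \<partial>M"
  have quotient_bound: "\<bar>(?I y - ?I v) / (y - v) - (\<integral>t. d t \<partial>M)\<bar> \<le> K * \<bar>y - v\<bar>"
    if y: "\<bar>y - v\<bar> < \<delta>" "y \<noteq> v" for y
  proof -
    let ?R = "\<lambda>t. g y t - g v t - (y - v) * d t"
    have iy: "integrable M (g y)" and iv: "integrable M (g v)"
      using integrable y \<open>0 < \<delta>\<close> by auto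
    have "\<bar>\<integral>t. ?R t \<partial>M\<bar> \<le> (\<integral>t. \<bar>?R t\<bar> \<partial>M)"
      by (rule integral_abs_bound)
    also have "\<dots> \<le> (\<integral>t. K * (y - v)^2 \<partial>M)"
      using remainder[OF y(1)] iy iv integrable_d by (intro integral_mono_AE) auto
    finally have bound: "\<bar>\<integral>t. ?R t \<partial>M\<bar> \<le> K * (y - v)^2"
      by (simp add: prob_space)
    have "(?I y - ?I v) / (y - v) - (\<integral>t. d t \<partial>M) = (\<integral>t. ?R t \<partial>M) / (y - v)"
      using iy iv integrable_d y by (simp add: field_simps)
    then have "\<bar>(?I y - ?I v) / (y - v) - (\<integral>t. d t \<partial>M)\<bar> \<le> K * (y - v)^2 / \<bar>y - v\<bar>"
      using bound by (simp add: divide_right_mono)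
    also have "(y - v)^2 = \<bar>y - v\<bar> * \<bar>y - v\<bar>"
      by (simp add: power2_eq_square)
    also have "K * (\<bar>y - v\<bar> * \<bar>y - v\<bar>) / \<bar>y - v\<bar> = K * \<bar>y - v\<bar>"
      using y by (simp del: abs_mult_self_eq)
    finally show ?thesis .
  qed
  have "eventually (\<lambda>y. norm ((?I y - ?I v) / (y - v) - (\<integral>t. d t \<partial>M)) \<le> K * \<bar>y - v\<bar>) (at v)"
    unfolding eventually_at using \<open>0 < \<delta>\<close> quotient_bound
    by (auto simp: dist_real_def intro!: exI[of _ \<delta>])
  moreover have "((\<lambda>y. K * \<bar>y - v\<bar>) \<longlongrightarrow> 0) (at v)"
    by (intro tendsto_eq_intros) auto
  ultimately have "((\<lambda>y. (?I y - ?I v) / (y - v) - (\<integral>t. d t \<partial>M)) \<longlongrightarrow> 0) (at v)"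
    by (rule Lim_null_comparison)
  then show ?thesis
    by (simp add: has_field_derivative_iff LIM_zero_iff)
qed

lemma divide_le_twice:
  fixes d x C :: real
  assumes "1/2 \<le> d" "0 \<le> x" "x \<le> C"
  shows "x / d \<le> 2 * C"
proof -
  have "x / d \<le> x / (1/2)"
    using assms by (intro divide_left_mono) auto
  then show ?thesis
    using assms by simp
qed

lemma inverse_affine_bounds:
  fixes y a A :: real
  assumes "1/2 \<le> 1 + y * a" "0 \<le> a" "a \<le> A"
  shows "0 < 1 / (1 + y * a)" "1 / (1 + y * a) \<le> 2"
    and "0 \<le> a / (1 + y * a)" "a / (1 + y * a) \<le> 2 * A"
  using assms divide_le_twice[of "1 + y * a" 1 1] divide_le_twice[of "1 + y * a" a A]
  by auto

lemma inverse_affine_taylor_bound: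
  fixes y v a A :: real
  assumes y: "1/2 \<le> 1 + y * a" and v: "1/2 \<le> 1 + v * a" and "0 \<le> a" "a \<le> A"
  shows "\<bar>a / (1 + y * a) - a / (1 + v * a) - (y - v) * - ((a / (1 + v * a))^2)\<bar>
    \<le> 8 * A^3 * (y - v)^2"
proof -
  have remainder: "a / (1 + y * a) - a / (1 + v * a) - (y - v) * - ((a / (1 + v * a))^2)
      = (y - v)^2 * (a^3 / ((1 + v * a)^2 * (1 + y * a)))"
  proof -
    define dy dv where "dy = 1 + y * a" and "dv = 1 + v * a"
    have "dy \<noteq> 0" "dv \<noteq> 0"
      using y v by (auto simp: dy_def dv_def)
    then have "a / dy - a / dv - (y - v) * - ((a / dv)^2) = (a * dv^2 - a * dy * dv + (y - v) * a^2 * dy) / (dv^2 * dy)"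
      by (simp add: field_simps power2_eq_square)
    also have "a * dv^2 - a * dy * dv + (y - v) * a^2 * dy = (y - v)^2 * a^3"
      by (simp add: dy_def dv_def power2_eq_square power3_eq_cube algebra_simps)
    finally show ?thesis
      by (simp add: dy_def dv_def)
  qed
  have "1/2 * (1/2) * (1/2) \<le> (1 + v * a) * (1 + v * a) * (1 + y * a)"
    using y v by (intro mult_mono) auto
  then have "a^3 / ((1 + v * a)^2 * (1 + y * a)) \<le> a^3 / (1/8)"
    using assms by (intro divide_left_mono) (auto simp: power2_eq_square)
  also have "\<dots> \<le> 8 * A^3"
    using assms by (simp add: power_mono)
  finally have bound: "\<bar>a^3 / ((1 + v * a)^2 * (1 + y * a))\<bar> \<le> 8 * A^3"
    using assms by simp
  show ?thesis
    unfolding remainder abs_mult abs_power2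
    using mult_left_mono[OF bound zero_le_power2[of "y - v"]] by (simp only: mult_ac)
qed

lemma ln_affine_taylor_bound:
  fixes y v a A :: real
  assumes y: "1/2 \<le> 1 + y * a" and v: "1/2 \<le> 1 + v * a" and "0 \<le> a" "a \<le> A"
    and close: "\<bar>y - v\<bar> * (2 * A) \<le> 1/2"
  shows "\<bar>ln (1 + y * a) - ln (1 + v * a) - (y - v) * (a / (1 + v * a))\<bar> \<le> 8 * A^2 * (y - v)^2"
proof -
  define x where "x = (y - v) * (a / (1 + v * a))"
  have "1 + x = (1 + y * a) / (1 + v * a)"
    using v by (simp add: x_def field_simps)
  then have ln_x: "ln (1 + y * a) - ln (1 + v * a) = ln (1 + x)"
    using y v by (simp add: ln_div)
  have "\<bar>a / (1 + v * a)\<bar> \<le> 2 * A"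
    using inverse_affine_bounds[OF v] assms by simp
  then have x_small: "\<bar>x\<bar> \<le> \<bar>y - v\<bar> * (2 * A)"
    unfolding x_def abs_mult by (intro mult_left_mono) auto
  then have "\<bar>ln (1 + x) - x\<bar> \<le> 2 * x^2"
    using close by (intro abs_ln_one_plus_x_minus_x_bound) simp
  also have "x^2 \<le> (\<bar>y - v\<bar> * (2 * A))^2"
    using x_small by (metis abs_ge_zero power2_abs power_mono)
  finally show ?thesis
    unfolding ln_x by (simp add: x_def power_mult_distrib mult_ac)
qed

lemma inverse_affine_eq_imp:
  fixes a v c :: real
  assumes "a / (1 + v * a) = c" "0 < 1 + v * a"
  shows "a * (1 - v * c) = c"
proof -
  have "a = c + c * (v * a)"
    using assms by (simp add: divide_eq_eq distrib_left)
  then show ?thesis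
    by (simp add: algebra_simps)
qed

lemma abs_ln_le:
  fixes z :: real
  assumes "1/2 \<le> z"
  shows "\<bar>ln z\<bar> \<le> 1 + \<bar>z - 1\<bar>"
proof -
  have "ln z \<le> z - 1"
    using assms by (intro ln_le_minus_one) auto
  moreover have "- ln z \<le> 1"
  proof -
    have "- ln z = ln (1 / z)"
      using assms by (simp add: ln_div)
    also have "\<dots> \<le> 1 / z - 1"
      using assms by (intro ln_le_minus_one) auto
    also have "1 / z \<le> 2 * 1"
      using assms by (intro divide_le_twice) auto
    finally show ?thesis by simp
  qed
  ultimately show ?thesis by linarith
qed

lemma continuous_on_compose_inv_into:
  fixes r :: "'a::t2_space \<Rightarrow> 'b::t2_space" and g :: "'a \<Rightarrow> 'c::topological_space"
  assumes "compact S" "continuous_on S r" "inj_on r S" "continuous_on S g"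
  shows "continuous_on (r ` S) (g \<circ> inv_into S r)"
proof (rule continuous_on_compose)
  show "continuous_on (r ` S) (inv_into S r)"
    using assms by (intro continuous_on_inv) auto
  show "continuous_on (inv_into S r ` r ` S) g"
    using assms by (simp add: inv_into_image_cancel)
qed

lemma phi_gau_has_integral:
  assumes "0 \<le> b"
  shows "(phi_gau has_integral ln (1 + b)) {0..b}"
proof -
  have "(phi_gau has_integral ln (1 + b) - ln (1 + 0)) {0..b}"
  proof (rule fundamental_theorem_of_calculus[OF assms])
    fix x :: real assume "x \<in> {0..b}"
    then have "((\<lambda>x. ln (1 + x)) has_real_derivative 1 / (1 + x)) (at x within {0..b})"
      by (auto intro!: derivative_eq_intros)
    then show "((\<lambda>x. ln (1 + x)) has_vector_derivative phi_gau x) (at x within {0..b})"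
      by (simp add: has_real_derivative_iff_has_vector_derivative phi_gau_def)
  qed
  then show ?thesis
    by simp
qed

lemma min_curve_le_1:
  assumes "0 \<le> \<rho>"
  shows "min_curve \<mu> snr \<rho> \<le> 1"
proof -
  have "min_curve \<mu> snr \<rho> \<le> phi_gau \<rho>"
    by (simp add: min_curve_def)
  also have "\<dots> \<le> 1"
    using assms by (simp add: phi_gau_def)
  finally show ?thesis .
qed

lemma integral_tendsto_of_convergence_from_below:
  fixes f :: "nat \<Rightarrow> real \<Rightarrow> real" and g :: "real \<Rightarrow> real"
  assumes integrable: "\<And>k. f k integrable_on {0..}"
    and below: "\<And>k \<rho>. \<rho> \<in> {0..<c} \<Longrightarrow> 0 \<le> f k \<rho> \<and> f k \<rho> < g \<rho>"
    and vanish: "\<And>k \<rho>. c \<le> \<rho> \<Longrightarrow> f k \<rho> = 0"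
    and converge: "\<And>\<rho>. \<rho> \<in> {0..<c} \<Longrightarrow> (\<lambda>k. f k \<rho>) \<longlonglongrightarrow> g \<rho>"
    and bounded: "\<And>\<rho>. \<rho> \<in> {0..<c} \<Longrightarrow> g \<rho> \<le> M"
    and "(g has_integral I) {0..c}"
  shows "(\<lambda>k. integral {0..} (f k)) \<longlonglongrightarrow> I"
proof -
  define g' where "g' \<rho> = (if \<rho> \<in> {0..<c} then g \<rho> else 0)" for \<rho>
  define h where "h \<rho> = (if \<rho> \<in> {0..c} then \<bar>M\<bar> else 0)" for \<rho>
  have "h integrable_on {0..c}"
    by (rule integrable_spike_finite[OF finite.emptyI _ integrable_const_ivl[of "\<bar>M\<bar>" 0 c]])
      (simp add: h_def)
  then have "h integrable_on {0..}"
    by (rule integrable_on_superset) (auto simp: h_def)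
  moreover have "norm (f k \<rho>) \<le> h \<rho>" if "\<rho> \<in> {0..}" for k \<rho>
    using that below[of \<rho> k] bounded[of \<rho>] vanish[of \<rho> k] by (fastforce simp: h_def)
  moreover have "(\<lambda>k. f k \<rho>) \<longlonglongrightarrow> g' \<rho>" if "\<rho> \<in> {0..}" for \<rho>
    using that converge[of \<rho>] vanish[of \<rho>] by (auto simp: g'_def)
  ultimately have "(\<lambda>k. integral {0..} (f k)) \<longlonglongrightarrow> integral {0..} g'"
    using integrable by (intro dominated_convergence(2))
  moreover have "(g' has_integral I) {0..c}"
    by (rule has_integral_spike_finite[OF _ _ \<open>(g has_integral I) {0..c}\<close>, of "{c}"])
      (auto simp: g'_def)
  then have "(g' has_integral I) {0..}"
    by (rule has_integral_on_superset) (auto simp: g'_def)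
  ultimately show ?thesis
    by (simp add: integral_unique)
qed

locale luis_spectrum = prob_space \<mu> for \<mu> :: "real measure" +
  fixes snr B :: real
  assumes sets_\<mu>: "sets \<mu> = sets borel"
    and support: "AE t in \<mu>. 0 \<le> t \<and> t \<le> B"
    and normalized: "(\<integral>t. t \<partial>\<mu>) = 1"
    and snr_pos: "0 < snr"
begin

definition "A = snr * B"

(* For y >= -d0 and 0 <= a <= A the denominator 1 + y a stays above 1/2; this margin below 0
   gives two-sided derivatives at v = 0. *)
definition "d0 = 1 / (2 * (A + 1))"

definition "p v = (\<integral>t. 1 / (1 + v * (snr * t)) \<partial>\<mu>)"
definition "q v = (\<integral>t. snr * t / (1 + v * (snr * t)) \<partial>\<mu>)"
definition "s v = (\<integral>t. (snr * t / (1 + v * (snr * t)))^2 \<partial>\<mu>)"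
definition "L v = (\<integral>t. ln (1 + v * (snr * t)) \<partial>\<mu>)"

lemma A_nonneg: "0 \<le> A"
proof -
  have "AE t in \<mu>. 0 \<le> B"
    using support by eventually_elim auto
  then show ?thesis
    using snr_pos by (simp add: A_def)
qed

lemma d0_pos: "0 < d0"
  using A_nonneg by (simp add: d0_def)

lemma borel_measurable_\<mu>: "f \<in> borel_measurable borel \<Longrightarrow> f \<in> borel_measurable \<mu>"
  using measurable_cong_sets[OF sets_\<mu> refl] by blast

lemma integrable_of_AE_bounded:
  assumes "f \<in> borel_measurable borel" "AE t in \<mu>. \<bar>f t\<bar> \<le> (C::real)"
  shows "integrable \<mu> f"
proof (rule Bochner_Integration.integrable_bound)
  show "integrable \<mu> (\<lambda>_. C)" by simp
  show "f \<in> borel_measurable \<mu>" by (rule borel_measurable_\<mu>[OF assms(1)])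
  show "AE t in \<mu>. norm (f t) \<le> norm C" using assms(2) by eventually_elim auto
qed

lemma AE_denominator_ge_half:
  assumes "-d0 \<le> y"
  shows "AE t in \<mu>. 0 \<le> snr * t \<and> snr * t \<le> A \<and> 1/2 \<le> 1 + y * (snr * t)"
  using support
proof eventually_elim
  fix t assume t: "0 \<le> t \<and> t \<le> B"
  then have a: "0 \<le> snr * t" "snr * t \<le> A"
    using snr_pos by (auto simp: A_def)
  have "-d0 * (snr * t) \<le> y * (snr * t)"
    using assms a by (intro mult_right_mono) auto
  moreover have "d0 * (snr * t) \<le> d0 * A"
    using a d0_pos by (intro mult_left_mono) auto
  moreover have "d0 * A \<le> 1/2"
    using A_nonneg by (simp add: d0_def field_simps)
  ultimately show "0 \<le> snr * t \<and> snr * t \<le> A \<and> 1/2 \<le> 1 + y * (snr * t)"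
    using a by auto
qed

lemma integrable_p:
  assumes "-d0 \<le> y"
  shows "integrable \<mu> (\<lambda>t. 1 / (1 + y * (snr * t)))"
  by (rule integrable_of_AE_bounded[where C = 2], measurable)
    (use AE_denominator_ge_half[OF assms] in \<open>eventually_elim, use inverse_affine_bounds in auto\<close>)

lemma integrable_q:
  assumes "-d0 \<le> y"
  shows "integrable \<mu> (\<lambda>t. snr * t / (1 + y * (snr * t)))"
  by (rule integrable_of_AE_bounded[where C = "2 * A"], measurable)
    (use AE_denominator_ge_half[OF assms] in \<open>eventually_elim, use inverse_affine_bounds in auto\<close>)

lemma integrable_s:
  assumes "-d0 \<le> y"
  shows "integrable \<mu> (\<lambda>t. (snr * t / (1 + y * (snr * t)))^2)"
proof (rule integrable_of_AE_bounded[where C = "(2 * A)^2"], measurable)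
  show "AE t in \<mu>. \<bar>(snr * t / (1 + y * (snr * t)))^2\<bar> \<le> (2 * A)^2"
    using AE_denominator_ge_half[OF assms]
  proof eventually_elim
    fix t assume "0 \<le> snr * t \<and> snr * t \<le> A \<and> 1/2 \<le> 1 + y * (snr * t)"
    then have "0 \<le> snr * t / (1 + y * (snr * t))" "snr * t / (1 + y * (snr * t)) \<le> 2 * A"
      using inverse_affine_bounds by auto
    then show "\<bar>(snr * t / (1 + y * (snr * t)))^2\<bar> \<le> (2 * A)^2"
      by (simp only: abs_power2 power_mono)
  qed
qed

lemma integrable_L:
  assumes "-d0 \<le> y"
  shows "integrable \<mu> (\<lambda>t. ln (1 + y * (snr * t)))"
proof (rule integrable_of_AE_bounded[where C = "1 + \<bar>y\<bar> * A"], measurable)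
  show "AE t in \<mu>. \<bar>ln (1 + y * (snr * t))\<bar> \<le> 1 + \<bar>y\<bar> * A"
    using AE_denominator_ge_half[OF assms]
  proof eventually_elim
    fix t assume t: "0 \<le> snr * t \<and> snr * t \<le> A \<and> 1/2 \<le> 1 + y * (snr * t)"
    have "\<bar>y * (snr * t)\<bar> = \<bar>y\<bar> * (snr * t)"
      using t by (metis abs_mult abs_of_nonneg)
    also have "\<dots> \<le> \<bar>y\<bar> * A"
      using t by (intro mult_left_mono) auto
    finally have "\<bar>y * (snr * t)\<bar> \<le> \<bar>y\<bar> * A" .
    then show "\<bar>ln (1 + y * (snr * t))\<bar> \<le> 1 + \<bar>y\<bar> * A"
      using abs_ln_le[of "1 + y * (snr * t)"] t by simp
  qed
qed

lemma p_eq_1_minus_q: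
  assumes "-d0 \<le> y"
  shows "p y = 1 - y * q y"
proof -
  have "p y = (\<integral>t. 1 - y * (snr * t / (1 + y * (snr * t))) \<partial>\<mu>)"
    unfolding p_def
  proof (intro integral_cong_AE borel_measurable_\<mu>)
    show "AE t in \<mu>. 1 / (1 + y * (snr * t)) = 1 - y * (snr * t / (1 + y * (snr * t)))"
      using AE_denominator_ge_half[OF assms] by eventually_elim (auto simp: field_simps)
  qed measurable
  also have "\<dots> = (\<integral>t. 1 \<partial>\<mu>) - (\<integral>t. y * (snr * t / (1 + y * (snr * t))) \<partial>\<mu>)"
    using integrable_mult_right[OF integrable_q[OF assms], of y]
    by (subst Bochner_Integration.integral_diff) (auto simp del: times_divide_eq_right)
  also have "\<dots> = 1 - y * q y"
    unfolding q_def by (simp add: prob_space del: times_divide_eq_right)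
  finally show ?thesis .
qed

lemma q_has_derivative:
  assumes "0 \<le> v"
  shows "(q has_real_derivative - s v) (at v)"
proof -
  have v: "-d0 \<le> v"
    using assms d0_pos by simp
  have "((\<lambda>y. \<integral>t. snr * t / (1 + y * (snr * t)) \<partial>\<mu>)
      has_real_derivative (\<integral>t. - ((snr * t / (1 + v * (snr * t)))^2) \<partial>\<mu>)) (at v)"
  proof (rule has_field_derivative_integral_quadratic_remainder[OF d0_pos, where K = "8 * A^3"])
    fix y assume "\<bar>y - v\<bar> < d0"
    then have y: "-d0 \<le> y"
      using assms by linarith
    show "integrable \<mu> (\<lambda>t. snr * t / (1 + y * (snr * t)))"
      by (rule integrable_q[OF y])
    show "AE t in \<mu>. \<bar>snr * t / (1 + y * (snr * t)) - snr * t / (1 + v * (snr * t))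
        - (y - v) * - ((snr * t / (1 + v * (snr * t)))^2)\<bar> \<le> 8 * A^3 * (y - v)^2"
      using AE_denominator_ge_half[OF y] AE_denominator_ge_half[OF v]
      by eventually_elim (intro inverse_affine_taylor_bound, auto)
  qed (use integrable_s[OF v] in simp)
  then show ?thesis
    by (simp add: q_def[abs_def] s_def)
qed

lemma L_has_derivative:
  assumes "0 \<le> v"
  shows "(L has_real_derivative q v) (at v)"
  unfolding L_def q_def
proof (rule has_field_derivative_integral_quadratic_remainder[where K = "8 * A^2" and \<delta> = "d0 / 2"])
  have v: "-d0 \<le> v"
    using assms d0_pos by simp
  fix y assume close: "\<bar>y - v\<bar> < d0 / 2"
  then have y: "-d0 \<le> y"
    using assms d0_pos by linarith
  have "\<bar>y - v\<bar> * (2 * A) \<le> d0 / 2 * (2 * A)"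
    using close A_nonneg by (intro mult_right_mono) auto
  also have "\<dots> \<le> 1/2"
    using A_nonneg by (simp add: d0_def field_simps)
  finally have small: "\<bar>y - v\<bar> * (2 * A) \<le> 1/2" .
  show "integrable \<mu> (\<lambda>t. ln (1 + y * (snr * t)))"
    by (rule integrable_L[OF y])
  show "AE t in \<mu>. \<bar>ln (1 + y * (snr * t)) - ln (1 + v * (snr * t))
      - (y - v) * (snr * t / (1 + v * (snr * t)))\<bar> \<le> 8 * A^2 * (y - v)^2"
    using AE_denominator_ge_half[OF y] AE_denominator_ge_half[OF v]
    by eventually_elim (intro ln_affine_taylor_bound small, auto)
qed (use assms d0_pos integrable_q in auto)

lemma p_pos:
  assumes "0 \<le> v"
  shows "0 < p v"
proof -
  have v: "-d0 \<le> v"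
    using assms d0_pos by simp
  have "(\<integral>t. 1 / (1 + v * A) \<partial>\<mu>) \<le> p v"
    unfolding p_def
  proof (rule integral_mono_AE[OF _ integrable_p[OF v]])
    show "AE t in \<mu>. 1 / (1 + v * A) \<le> 1 / (1 + v * (snr * t))"
      using AE_denominator_ge_half[OF v]
      by eventually_elim
        (use assms in \<open>auto intro!: divide_left_mono mult_left_mono mult_pos_pos add_pos_nonneg\<close>)
  qed simp
  then have "1 / (1 + v * A) \<le> p v"
    by (simp add: prob_space)
  moreover have "0 < 1 / (1 + v * A)"
    using assms A_nonneg by (simp add: add_pos_nonneg)
  ultimately show ?thesis
    by linarith
qed

lemma q_nonneg:
  assumes "0 \<le> v"
  shows "0 \<le> q v"
  unfolding q_def
  using AE_denominator_ge_half[of v] assms d0_pos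
  by (intro integral_nonneg_AE) auto

lemma s_minus_q_sq:
  assumes "0 \<le> v"
  shows "s v - (q v)^2 = (\<integral>t. (snr * t / (1 + v * (snr * t)) - q v)^2 \<partial>\<mu>)"
proof -
  have v: "-d0 \<le> v"
    using assms d0_pos by simp
  show ?thesis
    unfolding s_def q_def using variance_eq[OF integrable_q[OF v] integrable_s[OF v]] by simp
qed

lemma q_sq_le_s:
  assumes "0 \<le> v"
  shows "(q v)^2 \<le> s v"
proof -
  have "0 \<le> (\<integral>t. (snr * t / (1 + v * (snr * t)) - q v)^2 \<partial>\<mu>)"
    by (intro integral_nonneg_AE) simp
  then show ?thesis
    using s_minus_q_sq[OF assms] by linarith
qed

lemma p_has_derivative:
  assumes "0 \<le> v"
  shows "(p has_real_derivative v * s v - q v) (at v)"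
proof (rule has_field_derivative_transform_within_open)
  show "((\<lambda>y. 1 - y * q y) has_real_derivative v * s v - q v) (at v)"
    using q_has_derivative[OF assms] by (auto intro!: derivative_eq_intros)
  show "\<And>y. y \<in> {-d0<..} \<Longrightarrow> 1 - y * q y = p y"
    using p_eq_1_minus_q by simp
qed (use assms d0_pos in auto)

(* On (0, oo), G is gamma_hat and r is eta o G. *)
definition "G v = v * p v"
definition "r v = q v / p v"

lemma r_has_derivative:
  assumes "0 \<le> v"
  shows "(r has_real_derivative ((q v)^2 - s v) / (p v)^2) (at v)"
proof -
  have "p v \<noteq> 0" and pq: "p v = 1 - v * q v"
    using p_pos[OF assms] p_eq_1_minus_q assms d0_pos by auto
  have "(r has_real_derivative (- s v * p v - q v * (v * s v - q v)) / (p v * p v)) (at v)"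
    unfolding r_def[abs_def] using q_has_derivative[OF assms] p_has_derivative[OF assms] \<open>p v \<noteq> 0\<close>
    by (rule DERIV_divide)
  moreover have "- s v * p v - q v * (v * s v - q v) = (q v)^2 - s v"
    unfolding pq by (simp add: power2_eq_square algebra_simps)
  ultimately show ?thesis
    by (simp add: power2_eq_square)
qed

lemma G_has_derivative:
  assumes "0 \<le> v"
  shows "(G has_real_derivative p v + v * (v * s v - q v)) (at v)"
  unfolding G_def[abs_def] using p_has_derivative[OF assms]
  by (auto intro!: derivative_eq_intros)

lemma G_strict_mono:
  assumes "0 \<le> a" "a < b"
  shows "G a < G b"
proof (rule DERIV_pos_imp_increasing[OF assms(2)])
  fix v assume "a \<le> v" "v \<le> b"
  then have v: "0 \<le> v"
    using assms by simp
  have "v * v * (q v)^2 \<le> v * v * s v"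
    using q_sq_le_s[OF v] by (intro mult_left_mono) auto
  moreover have pq: "p v = 1 - v * q v"
    using p_eq_1_minus_q v d0_pos by simp
  ultimately have "(p v)^2 \<le> p v + v * (v * s v - q v)"
    unfolding pq by (simp add: power2_eq_square algebra_simps)
  moreover have "0 < (p v)^2"
    using p_pos[OF v] by simp
  ultimately have "0 < p v + v * (v * s v - q v)"
    by linarith
  then show "\<exists>y. (G has_real_derivative y) (at v) \<and> 0 < y"
    using G_has_derivative[OF v] by blast
qed

lemma continuous_on_r: "continuous_on {0..} r"
  by (intro continuous_at_imp_continuous_on ballI) (use r_has_derivative DERIV_isCont in auto)

lemma continuous_on_G: "continuous_on {0..} G"
  by (intro continuous_at_imp_continuous_on ballI) (use G_has_derivative DERIV_isCont in auto)

lemma G_pos: "0 < v \<Longrightarrow> 0 < G v"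
  using p_pos[of v] by (simp add: G_def)

lemma r_nonneg: "0 \<le> v \<Longrightarrow> 0 \<le> r v"
  unfolding r_def by (intro divide_nonneg_nonneg q_nonneg less_imp_le[OF p_pos])

lemma p_0: "p 0 = 1"
  by (simp add: p_def prob_space)

lemma L_0: "L 0 = 0"
  by (simp add: L_def)

lemma r_0: "r 0 = snr"
  using normalized by (simp add: r_def q_def p_0)

lemma gamma_hat_eq_G:
  assumes "0 < v"
  shows "gamma_hat \<mu> snr v = G v"
proof -
  have "gamma_hat \<mu> snr v = (\<integral>t. v * (1 / (1 + v * (snr * t))) \<partial>\<mu>)"
    unfolding gamma_hat_def
  proof (intro integral_cong_AE borel_measurable_\<mu>)
    show "AE t in \<mu>. 1 / (snr * t + 1 / v) = v * (1 / (1 + v * (snr * t)))"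
      using AE_denominator_ge_half[of v] assms d0_pos
      by (auto elim!: AE_mp simp: field_simps)
  qed measurable
  also have "\<dots> = G v"
    unfolding G_def p_def by (rule integral_mult_right_zero)
  finally show ?thesis .
qed

lemma gamma_hat_inv_G:
  assumes "0 < v"
  shows "gamma_hat_inv \<mu> snr (G v) = v"
  unfolding gamma_hat_inv_def
proof (rule the_equality)
  fix w assume "0 < w \<and> gamma_hat \<mu> snr w = G v"
  then have "0 < w" "G w = G v"
    using gamma_hat_eq_G by auto
  then show "w = v"
    using G_strict_mono[of w v] G_strict_mono[of v w] assms by (cases w v rule: linorder_cases) auto
qed (use assms gamma_hat_eq_G in simp)

lemma eta_G:
  assumes "0 < v"
  shows "eta \<mu> snr (G v) = r v"
proof -
  have "p v \<noteq> 0" and pq: "p v = 1 - v * q v"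
    using p_pos[of v] p_eq_1_minus_q[of v] assms d0_pos by auto
  then have "1 / (v * p v) - 1 / v = (1 - p v) / (v * p v)"
    using assms by (simp add: field_simps)
  also have "\<dots> = q v / p v"
    using assms by (simp add: pq)
  finally show ?thesis
    unfolding eta_def gamma_hat_inv_G[OF assms] unfolding r_def G_def .
qed

lemma eta_dom_eq: "eta_dom \<mu> snr = G ` {0<..}"
  unfolding eta_dom_def using gamma_hat_eq_G G_pos by auto

lemma rho_star_eq: "1 / gamma_hat \<mu> snr 1 - 1 = r 1"
proof -
  have "p 1 \<noteq> 0" "p 1 = 1 - q 1"
    using p_pos[of 1] p_eq_1_minus_q[of 1] d0_pos by auto
  then show ?thesis
    using gamma_hat_eq_G[of 1] by (simp add: G_def r_def field_simps)
qed

context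
  assumes nondegenerate: "\<not> (AE t in \<mu>. t = 1)"
begin

lemma q_sq_less_s:
  assumes v: "0 \<le> v"
  shows "(q v)^2 < s v"
proof (rule ccontr)
  let ?X = "\<lambda>t. snr * t / (1 + v * (snr * t))"
  have v': "-d0 \<le> v"
    using v d0_pos by simp
  assume "\<not> (q v)^2 < s v"
  then have "(\<integral>t. (?X t - q v)^2 \<partial>\<mu>) = 0"
    using q_sq_le_s[OF v] s_minus_q_sq[OF v] by simp
  moreover have "integrable \<mu> (\<lambda>t. (?X t - q v)^2)"
    unfolding power2_diff
    by (intro Bochner_Integration.integrable_diff Bochner_Integration.integrable_add
        integrable_mult_left integrable_mult_right integrable_s[OF v'] integrable_q[OF v']
        integrable_const)
  ultimately have "AE t in \<mu>. (?X t - q v)^2 = 0"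
    by (subst (asm) integral_nonneg_eq_0_iff_AE) auto
  then have const: "AE t in \<mu>. t = q v / (snr * p v)"
    using AE_denominator_ge_half[OF v']
  proof eventually_elim
    fix t assume "(?X t - q v)^2 = 0" "0 \<le> snr * t \<and> snr * t \<le> A \<and> 1/2 \<le> 1 + v * (snr * t)"
    then have "snr * t * (1 - v * q v) = q v"
      by (intro inverse_affine_eq_imp) auto
    then have "snr * t * p v = q v"
      using p_eq_1_minus_q[OF v'] by simp
    then show "t = q v / (snr * p v)"
      using p_pos[OF v] snr_pos by (simp add: field_simps)
  qed
  then have "(\<integral>t. t \<partial>\<mu>) = q v / (snr * p v)"
    by (simp add: integral_cong_AE[OF _ _ const] borel_measurable_\<mu> prob_space)
  then have "q v / (snr * p v) = 1"
    using normalized by linarith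
  then have "AE t in \<mu>. t = 1"
    using const by (simp only:)
  with nondegenerate show False ..
qed

lemma r_strict_antimono:
  assumes "0 \<le> a" "a < b"
  shows "r b < r a"
proof (rule DERIV_neg_imp_decreasing[OF assms(2)])
  fix v assume "a \<le> v" "v \<le> b"
  then have v: "0 \<le> v"
    using assms by simp
  have "((q v)^2 - s v) / (p v)^2 < 0"
    using q_sq_less_s[OF v] p_pos[OF v] by (simp add: divide_neg_pos)
  then show "\<exists>y. (r has_real_derivative y) (at v) \<and> y < 0"
    using r_has_derivative[OF v] by blast
qed

lemma inj_on_r: "inj_on r {0..}"
  by (rule inj_onI) (metis atLeast_iff linorder_cases r_strict_antimono less_irrefl)

lemma eta_inv_r:
  assumes "0 < v"
  shows "eta_inv \<mu> snr (r v) = G v"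
  unfolding eta_inv_def
proof (rule the_equality)
  show "G v \<in> eta_dom \<mu> snr \<and> eta \<mu> snr (G v) = r v"
    using eta_dom_eq eta_G assms by auto
  fix u assume "u \<in> eta_dom \<mu> snr \<and> eta \<mu> snr u = r v"
  then obtain w where "0 < w" "u = G w" "r w = r v"
    using eta_dom_eq eta_G by auto
  then show "u = G v"
    using inj_onD[OF inj_on_r, of w v] assms by simp
qed

lemma r_image: "r ` {0..1} = {r 1..snr}"
proof
  show "r ` {0..1} \<subseteq> {r 1..snr}"
    using r_strict_antimono r_0 by (force simp: le_less)
  show "{r 1..snr} \<subseteq> r ` {0..1}"
  proof
    fix \<rho> assume "\<rho> \<in> {r 1..snr}"
    then obtain v where "0 \<le> v" "v \<le> 1" "r v = \<rho>"
      using IVT2'[of r 1 \<rho> 0] continuous_on_subset[OF continuous_on_r] r_0 by auto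
    then show "\<rho> \<in> r ` {0..1}"
      by auto
  qed
qed

lemma integral_along_r_has_derivative_0:
  assumes F_cont: "continuous_on {r 1..snr} F" and F_r: "\<And>v. v \<in> {0..1} \<Longrightarrow> F (r v) = G v"
    and v: "v \<in> {0..1}"
  shows "((\<lambda>v. integral {r 1..r v} F + L v + ln (p v)) has_real_derivative 0) (at v within {0..1})"
proof -
  have pq: "p v = 1 - v * q v"
    using p_eq_1_minus_q v d0_pos by simp
  have "((\<lambda>x. integral {r 1..x} F) has_real_derivative F (r v)) (at (r v) within r ` {0..1})"
    unfolding r_image using v r_image by (intro integral_has_real_derivative[OF F_cont]) auto
  from DERIV_image_chain[OF this has_field_derivative_at_within[OF r_has_derivative]]
  have "((\<lambda>v. integral {r 1..r v} F) has_real_derivative G v * (((q v)^2 - s v) / (p v)^2))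
      (at v within {0..1})"
    using v F_r by (simp add: o_def)
  then have "((\<lambda>v. integral {r 1..r v} F + L v + ln (p v)) has_real_derivative
      G v * (((q v)^2 - s v) / (p v)^2) + q v + (v * s v - q v) / p v) (at v within {0..1})"
    using v p_pos[of v]
    by (auto intro!: derivative_eq_intros has_field_derivative_at_within[OF L_has_derivative]
        has_field_derivative_at_within[OF p_has_derivative])
  moreover have "G v * (((q v)^2 - s v) / (p v)^2) + q v + (v * s v - q v) / p v = 0"
    using p_pos[of v] v unfolding G_def
    by (simp add: field_simps power2_eq_square) (simp add: pq algebra_simps)
  ultimately show ?thesis
    by simp
qed

lemma eta_inv_has_integral_nondegenerate:
  "(eta_inv \<mu> snr has_integral (L 1 + ln (p 1))) {r 1..snr}"
proof -
  define F where "F = G \<circ> inv_into {0..1} r"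
  have F_r: "F (r v) = G v" if "v \<in> {0..1}" for v
    using that inj_on_subset[OF inj_on_r] by (simp add: F_def)
  have F_cont: "continuous_on {r 1..snr} F"
    unfolding F_def r_image[symmetric]
    by (intro continuous_on_compose_inv_into continuous_on_subset[OF continuous_on_G]
        continuous_on_subset[OF continuous_on_r] inj_on_subset[OF inj_on_r]) auto
  obtain c where "\<And>v. v \<in> {0..1} \<Longrightarrow> integral {r 1..r v} F + L v + ln (p v) = c"
    using has_field_derivative_zero_constant[OF convex_real_interval(5)
        integral_along_r_has_derivative_0[OF F_cont F_r]] by auto
  from this[of 0] this[of 1] have "integral {r 1..snr} F = L 1 + ln (p 1)"
    by (simp add: r_0 L_0 p_0)
  moreover have "F integrable_on {r 1..snr}"
    using F_cont by (rule integrable_continuous_interval)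
  ultimately have "(F has_integral (L 1 + ln (p 1))) {r 1..snr}"
    by (simp add: has_integral_integral)
  moreover have "eta_inv \<mu> snr \<rho> = F \<rho>" if "\<rho> \<in> {r 1..snr} - {snr}" for \<rho>
  proof -
    have "\<rho> \<in> r ` {0..1}"
      using that r_image by auto
    then obtain v where "v \<in> {0..1}" "\<rho> = r v"
      by auto
    moreover have "v \<noteq> 0"
      using that calculation r_0 by auto
    ultimately show ?thesis
      using eta_inv_r F_r by simp
  qed
  ultimately show ?thesis
    by (subst has_integral_spike_finite_eq[of "{snr}"]) auto
qed

end

context
  assumes degenerate: "AE t in \<mu>. t = 1"
begin

lemma integral_degenerate:
  fixes f :: "real \<Rightarrow> real"
  assumes "f \<in> borel_measurable borel"
  shows "(\<integral>t. f t \<partial>\<mu>) = f 1"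
proof -
  have "(\<integral>t. f t \<partial>\<mu>) = (\<integral>t. f 1 \<partial>\<mu>)"
    using degenerate assms by (intro integral_cong_AE borel_measurable_\<mu>) auto
  then show ?thesis
    by (simp add: prob_space)
qed

lemma r_degenerate:
  assumes "0 \<le> v"
  shows "r v = snr"
proof -
  have "0 < 1 + v * snr"
    using assms snr_pos by (simp add: add_pos_nonneg)
  then show ?thesis
    by (simp add: r_def p_def q_def integral_degenerate)
qed

lemma eta_inv_has_integral_degenerate:
  "(eta_inv \<mu> snr has_integral (L 1 + ln (p 1))) {r 1..snr}"
proof -
  have "L 1 + ln (p 1) = 0"
    using snr_pos by (simp add: L_def p_def integral_degenerate ln_div)
  then show ?thesis
    using r_degenerate[of 1] has_integral_refl(2)[of "eta_inv \<mu> snr" snr] by simp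
qed

end

lemma eta_inv_has_integral: "(eta_inv \<mu> snr has_integral (L 1 + ln (p 1))) {r 1..snr}"
  using eta_inv_has_integral_degenerate eta_inv_has_integral_nondegenerate by blast

lemma r_1_le_snr: "r 1 \<le> snr"
  using r_degenerate[of 1] r_strict_antimono[of 0 1] r_0 by fastforce

lemma ln_one_plus_r_1: "ln (1 + r 1) = - ln (p 1)"
proof -
  have "1 + r 1 = 1 / p 1"
    using rho_star_eq gamma_hat_eq_G[of 1] by (simp add: G_def)
  then show ?thesis
    using p_pos[of 1] by (simp add: ln_div)
qed

lemma area_eq_L_1: "integral {0..r 1} phi_gau + integral {r 1..snr} (eta_inv \<mu> snr) = L 1"
  using integral_unique[OF phi_gau_has_integral[OF r_nonneg]] integral_unique[OF eta_inv_has_integral]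
    ln_one_plus_r_1 by simp

lemma G_less_phi_gau_r_iff:
  assumes "0 < w"
  shows "G w < phi_gau (r w) \<longleftrightarrow> w < 1"
proof -
  have "p w \<noteq> 0" and pq: "p w = 1 - w * q w"
    using p_pos[of w] p_eq_1_minus_q[of w] assms d0_pos by auto
  then have "G w * (1 + r w) = w * p w + w * q w"
    by (simp add: G_def r_def field_simps)
  also have "\<dots> = 1 + (w - 1) * p w"
    using pq by (simp add: algebra_simps)
  finally have product: "G w * (1 + r w) = 1 + (w - 1) * p w" .
  have "0 < 1 + r w"
    using r_nonneg[of w] assms by simp
  then have "G w < phi_gau (r w) \<longleftrightarrow> G w * (1 + r w) < 1"
    by (simp add: phi_gau_def pos_less_divide_eq)
  also have "\<dots> \<longleftrightarrow> (w - 1) * p w < 0"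
    unfolding product by simp
  also have "\<dots> \<longleftrightarrow> w < 1"
    using p_pos[of w] assms by (simp add: mult_less_0_iff)
  finally show ?thesis .
qed

lemma eta_hits_iff: "(\<exists>u\<in>eta_dom \<mu> snr. eta \<mu> snr u = \<rho>) \<longleftrightarrow> (\<exists>w>0. r w = \<rho>)"
  unfolding eta_dom_eq using eta_G by auto

lemma min_curve_eq:
  assumes "0 \<le> \<rho>" "\<rho> < snr"
  shows "min_curve \<mu> snr \<rho> = (if \<rho> \<le> r 1 then phi_gau \<rho> else eta_inv \<mu> snr \<rho>)"
proof (cases "AE t in \<mu>. t = 1")
  case True
  then have "\<not> (\<exists>w>0. r w = \<rho>)" "\<rho> \<le> r 1"
    using r_degenerate assms by auto
  then show ?thesis
    unfolding min_curve_def eta_hits_iff by auto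
next
  case nd: False
  show ?thesis
  proof (cases "\<rho> \<le> r 1")
    case True
    have "phi_gau \<rho> \<le> eta_inv \<mu> snr \<rho>" if "0 < w" "r w = \<rho>" for w
    proof -
      have "1 \<le> w"
        using r_strict_antimono[OF nd, of w 1] that True by fastforce
      then show ?thesis
        using G_less_phi_gau_r_iff[OF that(1)] eta_inv_r[OF nd that(1)] that by simp
    qed
    then show ?thesis
      using True unfolding min_curve_def eta_hits_iff by auto
  next
    case False
    obtain w where w: "0 \<le> w" "w \<le> 1" "r w = \<rho>"
      using IVT2'[of r 1 \<rho> 0] continuous_on_subset[OF continuous_on_r] False assms r_0 by auto
    then have "0 < w" "w < 1"
      using False assms r_0 by (auto simp: le_less)
    then have "eta_inv \<mu> snr \<rho> < phi_gau \<rho>"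
      using G_less_phi_gau_r_iff eta_inv_r[OF nd] w by auto
    then show ?thesis
      using False \<open>0 < w\<close> w unfolding min_curve_def eta_hits_iff by auto
  qed
qed

lemma min_curve_has_integral: "(min_curve \<mu> snr has_integral L 1) {0..snr}"
proof -
  let ?T = "\<lambda>\<rho>. if \<rho> \<le> r 1 then phi_gau \<rho> else eta_inv \<mu> snr \<rho>"
  have "(?T has_integral ln (1 + r 1)) {0..r 1}"
    using phi_gau_has_integral[OF r_nonneg] by (rule has_integral_eq[rotated]) auto
  moreover have "(?T has_integral (L 1 + ln (p 1))) {r 1..snr}"
    by (rule has_integral_spike_finite[OF _ _ eta_inv_has_integral, of "{r 1}"]) auto
  ultimately have "(?T has_integral L 1) {0..snr}"
    using has_integral_combine[OF r_nonneg r_1_le_snr] ln_one_plus_r_1 by fastforce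
  then show ?thesis
    by (rule has_integral_spike_finite[rotated 2, where S = "{snr}"]) (auto simp: min_curve_eq)
qed

end

theorem theorem3:
  fixes \<mu> :: "real measure" and snr B :: real
    and f :: "nat \<Rightarrow> real \<Rightarrow> real"
  assumes prob: "prob_space \<mu>"
    and sets_mu: "sets \<mu> = sets borel"
    and compact_supp: "AE t in \<mu>. 0 \<le> t \<and> t \<le> B"
    and normalized: "(\<integral>t. t \<partial>\<mu>) = 1"
    and snr_pos: "0 < snr"
  defines "\<rho>s \<equiv> 1 / gamma_hat \<mu> snr 1 - 1"
  shows "integral {0..\<rho>s} phi_gau + integral {\<rho>s..snr} (eta_inv \<mu> snr) = C_gau_luis \<mu> snr
         \<and> ((\<forall>k. f k integrable_on {0..}
               \<and> (\<forall>\<rho>\<in>{0..<snr}. 0 \<le> f k \<rho> \<and> f k \<rho> < min_curve \<mu> snr \<rho>)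
               \<and> (\<forall>\<rho>\<ge>snr. f k \<rho> = 0))
            \<and> (\<forall>\<rho>\<in>{0..<snr}. (\<lambda>k. f k \<rho>) \<longlonglongrightarrow> min_curve \<mu> snr \<rho>)
            \<longrightarrow> (\<lambda>k. integral {0..} (f k)) \<longlonglongrightarrow> C_gau_luis \<mu> snr)"
proof -
  interpret luis_spectrum \<mu> snr B
    by (intro luis_spectrum.intro luis_spectrum_axioms.intro) fact+
  have capacity: "C_gau_luis \<mu> snr = L 1"
    by (simp add: C_gau_luis_def L_def)
  have "(\<lambda>k. integral {0..} (f k)) \<longlonglongrightarrow> L 1"
    if "\<forall>k. f k integrable_on {0..}
          \<and> (\<forall>\<rho>\<in>{0..<snr}. 0 \<le> f k \<rho> \<and> f k \<rho> < min_curve \<mu> snr \<rho>)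
          \<and> (\<forall>\<rho>\<ge>snr. f k \<rho> = 0)"
      and "\<forall>\<rho>\<in>{0..<snr}. (\<lambda>k. f k \<rho>) \<longlonglongrightarrow> min_curve \<mu> snr \<rho>"
    by (rule integral_tendsto_of_convergence_from_below[where M = 1])
      (use that min_curve_has_integral min_curve_le_1 in auto)
  then show ?thesis
    unfolding \<rho>s_def rho_star_eq capacity using area_eq_L_1 by blast
qed

end
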